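(* Let $\mathcal W$ be a cylindric wiring diagram of a bi-infinite reduced word in $\hat S_n$, lifted to the universal cover with wire and chamber labels as below, and let $\tau:\mathbb Z^n\to\mathbb R\setminus\{0\}$ be a cylindric Berenstein–Hirota–Zelevinsky datum. Suppose every crossing of $\mathcal W$ carries the weight $$a=(\alpha_i-\alpha_j)\frac{\tau(\mathbf s)\,\tau(\mathbf s+e_i+e_j)}{\tau(\mathbf s+e_i)\,\tau(\mathbf s+e_j)},$$ where $i$ and $j$ are the residues mod $n$ of the labels of the upper and lower wires of (a lift of) the crossing, $\mathbf s$ is the label of the chamber directly below it (so that the chamber directly above has label $\mathbf s+e_i+e_j$ and the two side chambers have labels $\mathbf s+e_i$, $\mathbf s+e_j$). Then after applying any finite sequence of weighted braid moves and commutation moves to $\mathcal W$, the weight of every crossing of the resulting diagram is again given by the same formula (with the chamber labels of the new diagram).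
   Context: $\hat S_n$: generators $s_0,\dots,s_{n-1}$ (indices mod $n$), relations $s_i^2=1$, $s_is_js_i=s_js_is_j$ if $i-j\equiv\pm1$, $s_is_j=s_js_i$ if $i-j\not\equiv0,\pm1\pmod n$. Wiring diagram: letters are drawn left to right on a cylinder with wires in positions $1,\dots,n$ (mod $n$), $s_i$ being a crossing of positions $i,i+1$ ($s_0$: positions $n$ and $1$); the upper wire of a crossing is the one passing from the higher to the lower position. Universal cover: positions are integers, each crossing lifting to crossings of positions $p,p+1$ for all $p\equiv i$; lifted wires are labelled by integers according to their positions at a fixed vertical line, and labels are carried along by moves. Chamber label: if $S$ is the set of labels of wires passing below a chamber, its label is $(\mathbf s_1,\dots,\mathbf s_n)$ with $\mathbf s_i=\lceil\max\{b\in S:b\equiv i \bmod n\}/n\rceil$. Each wire labelled $b$ has parameter $\alpha_{b \bmod n}$ where $\alpha_1,\dots,\alpha_n$ are fixed reals (residues taken in $\{1,\dots,n\}$). $e_1,\dots,e_n$ is the standard basis of $\mathbb Z^n$. A BHZ datum is a function $\tau:\mathbb Z^n\to\mathbb R$ such that for all $\mathbf s\in\mathbb Z^n$ and distinct $i,j,k\in\{1,\dots,n\}$: $(\alpha_i-\alpha_j)\tau(\mathbf s+e_k)\tau(\mathbf s+e_i+e_j)+(\alpha_j-\alpha_k)\tau(\mathbf s+e_i)\tau(\mathbf s+e_j+e_k)+(\alpha_k-\alpha_i)\tau(\mathbf s+e_j)\tau(\mathbf s+e_i+e_k)=0$; it is cylindric if moreover $\tau(\mathbf s+e_1+\dots+e_n)=\tau(\mathbf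 s)$ for all $\mathbf s$ (so the weight formula does not depend on the chosen lift). Weighted moves: $s_i(a)s_j(b)s_i(c)\mapsto s_j(\tfrac{bc}{a+c})s_i(a+c)s_j(\tfrac{ab}{a+c})$ if $i-j\equiv\pm1$, $s_i(a)s_j(b)\mapsto s_j(b)s_i(a)$ if $i-j\not\equiv0,\pm1\pmod n$. *)

theory Defs
  imports Complex_Main
begin

definition resid :: "nat \<Rightarrow> int \<Rightarrow> nat" where
  "resid n b = (if b mod int n = 0 then n else nat (b mod int n))"

text \<open>The letter s_i acts on positions of the universal cover by swapping
  positions p and p+1 for every p congruent to i mod n.\<close>
definition sw :: "nat \<Rightarrow> nat \<Rightarrow> int \<Rightarrow> int" where
  "sw n i p = (if p mod int n = int i then p + 1
               else if (p - 1) mod int n = int i then p - 1 else p)"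

text \<open>Product of a word as an affine permutation (faithful model of the affine symmetric group).\<close>
definition word_perm :: "nat \<Rightarrow> nat list \<Rightarrow> int \<Rightarrow> int" where
  "word_perm n xs = foldr (\<lambda>i f. sw n i \<circ> f) xs id"

definition reduced_word :: "nat \<Rightarrow> nat list \<Rightarrow> bool" where
  "reduced_word n xs \<longleftrightarrow> (\<forall>x\<in>set xs. x < n) \<and>
     (\<forall>ys. (\<forall>y\<in>set ys. y < n) \<and> word_perm n ys = word_perm n xs \<longrightarrow> length xs \<le> length ys)"

definition biinf_reduced :: "nat \<Rightarrow> (int \<Rightarrow> nat) \<Rightarrow> bool" where
  "biinf_reduced n w \<longleftrightarrow> (\<forall>t. w t < n) \<and>
     (\<forall>t m. reduced_word n (map (\<lambda>k. w (t + int k)) [0..<m]))"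

text \<open>Z^n modelled as functions nat => int supported in {1..n}.\<close>
definition zvec :: "nat \<Rightarrow> (nat \<Rightarrow> int) set" where
  "zvec n = {s. \<forall>k. k \<notin> {1..n} \<longrightarrow> s k = 0}"

definition uvec :: "nat \<Rightarrow> nat \<Rightarrow> int" where
  "uvec i = (\<lambda>k. if k = i then 1 else 0)"

definition vadd :: "(nat \<Rightarrow> int) \<Rightarrow> (nat \<Rightarrow> int) \<Rightarrow> nat \<Rightarrow> int" where
  "vadd f g = (\<lambda>k. f k + g k)"

definition BHZ :: "nat \<Rightarrow> (nat \<Rightarrow> real) \<Rightarrow> ((nat \<Rightarrow> int) \<Rightarrow> real) \<Rightarrow> bool" where
  "BHZ n \<alpha> \<tau> \<longleftrightarrow> (\<forall>s\<in>zvec n. \<forall>i\<in>{1..n}. \<forall>j\<in>{1..n}. \<forall>k\<in>{1..n}.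
     i \<noteq> j \<and> j \<noteq> k \<and> i \<noteq> k \<longrightarrow>
       (\<alpha> i - \<alpha> j) * \<tau> (vadd s (uvec k)) * \<tau> (vadd (vadd s (uvec i)) (uvec j))
     + (\<alpha> j - \<alpha> k) * \<tau> (vadd s (uvec i)) * \<tau> (vadd (vadd s (uvec j)) (uvec k))
     + (\<alpha> k - \<alpha> i) * \<tau> (vadd s (uvec j)) * \<tau> (vadd (vadd s (uvec i)) (uvec k)) = 0)"

definition all_ones :: "nat \<Rightarrow> nat \<Rightarrow> int" where
  "all_ones n = (\<lambda>k. if k \<in> {1..n} then 1 else 0)"

definition cylindric_BHZ :: "nat \<Rightarrow> (nat \<Rightarrow> real) \<Rightarrow> ((nat \<Rightarrow> int) \<Rightarrow> real) \<Rightarrow> bool" where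
  "cylindric_BHZ n \<alpha> \<tau> \<longleftrightarrow> BHZ n \<alpha> \<tau> \<and> (\<forall>s\<in>zvec n. \<tau> (vadd s (all_ones n)) = \<tau> s)"

text \<open>Chamber label of a chamber whose set of wires passing below it is S.\<close>
definition chamber_label :: "nat \<Rightarrow> int set \<Rightarrow> nat \<Rightarrow> int" where
  "chamber_label n S = (\<lambda>r. if r \<in> {1..n}
      then \<lceil>real_of_int (GREATEST b. b \<in> S \<and> resid n b = r) / real n\<rceil> else 0)"

text \<open>L t p = label of the lifted wire at position p on the vertical line just before
  letter t (column t).  Letter t lies between columns t and t+1.\<close>
definition labels_consistent :: "nat \<Rightarrow> (int \<Rightarrow> nat) \<Rightarrow> (int \<Rightarrow> int \<Rightarrow> int) \<Rightarrow> bool" where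
  "labels_consistent n w L \<longleftrightarrow> (\<forall>t. L (t + 1) = L t \<circ> sw n (w t))"

text \<open>Formula for the weight of the lift of letter t crossing positions p and p+1:
  upper wire is the one at position p+1 on column t (going down), lower one at p;
  the chamber directly below has the wires at positions < p below it.\<close>
definition crossing_weight ::
  "nat \<Rightarrow> (nat \<Rightarrow> real) \<Rightarrow> ((nat \<Rightarrow> int) \<Rightarrow> real) \<Rightarrow> (int \<Rightarrow> int \<Rightarrow> int) \<Rightarrow> int \<Rightarrow> int \<Rightarrow> real" where
  "crossing_weight n \<alpha> \<tau> L t p =
     (let i = resid n (L t (p + 1)); j = resid n (L t p);
          s = chamber_label n {L t q | q. q < p}
      in (\<alpha> i - \<alpha> j) * \<tau> s * \<tau> (vadd (vadd s (uvec i)) (uvec j))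
         / (\<tau> (vadd s (uvec i)) * \<tau> (vadd s (uvec j))))"

definition weights_given ::
  "nat \<Rightarrow> (nat \<Rightarrow> real) \<Rightarrow> ((nat \<Rightarrow> int) \<Rightarrow> real) \<Rightarrow> (int \<Rightarrow> nat) \<Rightarrow> (int \<Rightarrow> real)
     \<Rightarrow> (int \<Rightarrow> int \<Rightarrow> int) \<Rightarrow> bool" where
  "weights_given n \<alpha> \<tau> w a L \<longleftrightarrow>
     (\<forall>t p. p mod int n = int (w t) \<longrightarrow> a t = crossing_weight n \<alpha> \<tau> L t p)"

definition adjacent_letters :: "nat \<Rightarrow> nat \<Rightarrow> nat \<Rightarrow> bool" where
  "adjacent_letters n i j \<longleftrightarrow> (int i - int j) mod int n \<in> {1, int n - 1}"

definition commuting_letters :: "nat \<Rightarrow> nat \<Rightarrow> nat \<Rightarrow> bool" where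
  "commuting_letters n i j \<longleftrightarrow> (int i - int j) mod int n \<notin> {0, 1, int n - 1}"

text \<open>Labels are carried along: the new labelling is consistent with the new word and
  agrees with the old one on column k (left of the move).\<close>
definition wmove :: "nat \<Rightarrow> (int \<Rightarrow> nat) \<times> (int \<Rightarrow> real) \<times> (int \<Rightarrow> int \<Rightarrow> int)
                          \<Rightarrow> (int \<Rightarrow> nat) \<times> (int \<Rightarrow> real) \<times> (int \<Rightarrow> int \<Rightarrow> int) \<Rightarrow> bool" where
  "wmove n C C' \<longleftrightarrow> (case C of (w, a, L) \<Rightarrow> case C' of (w', a', L') \<Rightarrow>
     (\<exists>k. labels_consistent n w' L' \<and> L' k = L k \<and>
       ((adjacent_letters n (w k) (w (k + 1)) \<and> w (k + 2) = w k \<and> a k + a (k + 2) \<noteq> 0 \<and>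
         w' = w(k := w (k + 1), k + 1 := w k, k + 2 := w (k + 1)) \<and>
         a' = a(k := a (k + 1) * a (k + 2) / (a k + a (k + 2)),
                k + 1 := a k + a (k + 2),
                k + 2 := a k * a (k + 1) / (a k + a (k + 2))))
        \<or>
        (commuting_letters n (w k) (w (k + 1)) \<and>
         w' = w(k := w (k + 1), k + 1 := w k) \<and>
         a' = a(k := a (k + 1), k + 1 := a k)))))"

end

theory Submission
  imports Defs "HOL-Number_Theory.Cong"
begin

text \<open>
  The weight of a crossing depends only on the residues of its two wires and on the label of the
  chamber below it. A weighted move rewrites two or three consecutive letters, and the wire labels
  outside them are unchanged (for a braid move by the braid relation of the affine symmetric
  group), so all other crossings keep their weights. The two crossings of a commutation move lie
  on disjoint pairs of positions and keep their wires and chambers. The six crossings involved in a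
  braid move lie, in each lift, in a triangle on positions \<open>m, m + 1, m + 2\<close>; if \<open>x, y, z\<close> are
  the residues of its wires and \<open>s\<close> is the chamber at its bottom, every weight is a ratio of values of
  \<open>\<tau>\<close> at \<open>s + \<epsilon>\<close>, \<open>\<epsilon> \<subseteq> {e\<^sub>x, e\<^sub>y, e\<^sub>z}\<close>. For the weights \<open>a\<^sub>1, b\<^sub>1, c\<^sub>1\<close> of one reading of the
  triangle and \<open>a\<^sub>2, b\<^sub>2, c\<^sub>2\<close> of the other, \<open>a\<^sub>2 b\<^sub>2 = b\<^sub>1 c\<^sub>1\<close> and \<open>a\<^sub>1 b\<^sub>1 = b\<^sub>2 c\<^sub>2\<close> hold
  identically, and the BHZ relation at \<open>s\<close> for \<open>x, y, z\<close> gives \<open>a\<^sub>1 + c\<^sub>1 = b\<^sub>2\<close> and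
  \<open>a\<^sub>2 + c\<^sub>2 = b\<^sub>1\<close>: these are the formulas of the weighted braid move.
\<close>

section \<open>Residues and the action of the letters\<close>

lemma cong_small_iff:
  fixes a b m :: int
  assumes "\<bar>a - b\<bar> < m"
  shows "[a = b] (mod m) \<longleftrightarrow> a = b"
proof
  assume "[a = b] (mod m)"
  then have "m dvd a - b" by (simp add: cong_iff_dvd_diff)
  show "a = b"
  proof (rule ccontr)
    assume "a \<noteq> b"
    with \<open>m dvd a - b\<close> have "\<bar>m\<bar> \<le> \<bar>a - b\<bar>" by (simp add: dvd_imp_le_int)
    with assms show False by linarith
  qed
qed simp

lemma not_cong_add_small:
  fixes m a b :: int
  assumes "n \<ge> 3" "a \<noteq> b" "\<bar>a - b\<bar> \<le> 2"
  shows "\<not> [m + a = m + b] (mod int n)"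
  using assms by (simp add: cong_add_lcancel cong_small_iff)

lemma cong_pred_iff: "[q = p - 1] (mod m) \<longleftrightarrow> [p = q + 1] (mod m)"
  for p q m :: int
  by (metis cong_add_rcancel cong_sym_eq diff_add_cancel)

lemma cong_less_imp_add_le:
  fixes p q m :: int
  assumes "[q = p] (mod m)" "p < q" "m \<ge> 0"
  shows "p + m \<le> q"
proof -
  from assms(1) have "[p = q] (mod m)" by (rule cong_sym)
  then obtain c where c: "q = p + m * c" by (auto simp: cong_iff_lin)
  with assms(2,3) have "c \<ge> 1" by (simp add: zero_less_mult_iff)
  with c assms(3) show ?thesis by (simp add: mult_le_cancel_left1)
qed

lemma mod_eq_iff_cong:
  fixes x r m :: int
  assumes "0 \<le> r" "r < m"
  shows "x mod m = r \<longleftrightarrow> [x = r] (mod m)"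
  using assms by (simp add: cong_def)

lemma letter_difference_mod_iff:
  assumes "n \<ge> 2"
  shows "(int i - int j) mod int n = 0 \<longleftrightarrow> [int i = int j] (mod int n)"
    and "(int i - int j) mod int n = 1 \<longleftrightarrow> [int i = int j + 1] (mod int n)"
    and "(int i - int j) mod int n = int n - 1 \<longleftrightarrow> [int j = int i + 1] (mod int n)"
proof -
  show "(int i - int j) mod int n = 0 \<longleftrightarrow> [int i = int j] (mod int n)"
    by (simp add: cong_iff_dvd_diff dvd_eq_mod_eq_0)
  show "(int i - int j) mod int n = 1 \<longleftrightarrow> [int i = int j + 1] (mod int n)"
    using assms mod_eq_iff_cong[of 1 "int n" "int i - int j"]
    unfolding cong_iff_dvd_diff by (simp add: algebra_simps)
  show "(int i - int j) mod int n = int n - 1 \<longleftrightarrow> [int j = int i + 1] (mod int n)"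
  proof -
    have "int i - int j - (int n - 1) = - (int j - (int i + 1)) + (- 1) * int n" by simp
    then show ?thesis
      using assms mod_eq_iff_cong[of "int n - 1" "int n" "int i - int j"]
      unfolding cong_iff_dvd_diff by (simp only: dvd_add_times_triv_right_iff dvd_minus_iff)
  qed
qed

lemma adjacent_letters_iff_cong:
  "n \<ge> 2 \<Longrightarrow> adjacent_letters n i j \<longleftrightarrow>
    [int i = int j + 1] (mod int n) \<or> [int j = int i + 1] (mod int n)"
  unfolding adjacent_letters_def by (simp add: letter_difference_mod_iff)

lemma commuting_letters_iff_cong:
  "n \<ge> 2 \<Longrightarrow> commuting_letters n i j \<longleftrightarrow> \<not> [int i = int j] (mod int n) \<and>
    \<not> [int i = int j + 1] (mod int n) \<and> \<not> [int j = int i + 1] (mod int n)"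
  unfolding commuting_letters_def by (simp add: letter_difference_mod_iff)

lemma sw_altdef:
  assumes "i < n" "[int i = c] (mod int n)"
  shows "sw n i p = (if [p = c] (mod int n) then p + 1 else if [p = c + 1] (mod int n) then p - 1 else p)"
proof -
  have i: "int i mod int n = int i" using assms(1) by simp
  have "p mod int n = int i \<longleftrightarrow> [p = c] (mod int n)"
    using assms(2) i by (metis cong_def)
  moreover have "(p - 1) mod int n = int i \<longleftrightarrow> [p = c + 1] (mod int n)"
    using assms(2) i by (metis cong_def cong_add_rcancel diff_add_cancel)
  ultimately show ?thesis by (simp add: sw_def)
qed

lemma sw_periodic: "sw n i (p + int n * q) = sw n i p + int n * q"
proof -
  have "(p + int n * q - 1) mod int n = (p - 1) mod int n"
    by (metis add_diff_eq diff_add_eq mod_mult_self2)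
  then show ?thesis by (simp add: sw_def)
qed

lemma sw_involutive:
  assumes "n \<ge> 2" "i < n"
  shows "sw n i (sw n i p) = p"
proof -
  have small: "[a = b] (mod int n) \<longleftrightarrow> a = b" if "\<bar>a - b\<bar> < 2" for a b :: int
    using assms that by (intro cong_small_iff) auto
  consider "[int i = p] (mod int n)" | "[int i = p - 1] (mod int n)"
    | "\<not> [p = int i] (mod int n)" "\<not> [p = int i + 1] (mod int n)"
    by (metis cong_sym cong_add_rcancel diff_add_cancel)
  then show ?thesis
  proof cases
    case 1
    then show ?thesis by (simp add: sw_altdef[OF assms(2) 1] small cong_add_lcancel_0)
  next
    case 2
    then show ?thesis by (simp add: sw_altdef[OF assms(2) 2] small cong_add_lcancel_0)
  next
    case 3
    then show ?thesis by (simp add: sw_altdef[OF assms(2) cong_refl])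
  qed
qed

lemma sw_succ_imp_cong: "sw n i p = p + 1 \<Longrightarrow> [p = int i] (mod int n)"
  by (auto simp: sw_def cong_def split: if_splits) (metis mod_mod_trivial)

lemma sw_le_succ: "sw n i p \<le> p + 1"
  by (simp add: sw_def)

lemma sw_braid_succ:
  assumes n: "n \<ge> 3" and ij: "i < n" "j < n" and adj: "[int j = int i + 1] (mod int n)"
  shows "sw n i (sw n j (sw n i p)) = sw n j (sw n i (sw n j p))"
proof -
  define c where "c = int i"
  define e where "e = (p - c) mod int n"
  have p: "p = (c + e) + int n * ((p - c) div int n)" unfolding e_def by simp
  have e: "0 \<le> e" "e < int n" using n unfolding e_def by auto
  have I: "sw n i x = (if [x = c] (mod int n) then x + 1 else if [x = c + 1] (mod int n) then x - 1 else x)" for x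
    using sw_altdef[OF ij(1) cong_refl] c_def by simp
  have J: "sw n j x = (if [x = c + 1] (mod int n) then x + 1 else if [x = c + 2] (mod int n) then x - 1 else x)" for x
    using sw_altdef[OF ij(2) adj, of x] unfolding c_def by (simp add: add.assoc)
  have small: "[a = b] (mod int n) \<longleftrightarrow> a = b" if "\<bar>a - b\<bar> < 3" for a b :: int
    using n that by (intro cong_small_iff) auto
  \<comment> \<open>by periodicity only the positions \<open>c + e\<close>, \<open>0 \<le> e < n\<close>, matter; for \<open>e \<ge> 3\<close> all reflections fix them\<close>
  have "sw n i (sw n j (sw n i (c + e))) = sw n j (sw n i (sw n j (c + e)))"
  proof -
    consider "e = 0" | "e = 1" | "e = 2" | "3 \<le> e" using e by linarith
    then show ?thesis
    proof cases
      case 4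
      have "\<not> [c + e = c + k] (mod int n)" if "k \<in> {0, 1, 2}" for k
        using 4 e that by (subst cong_add_lcancel, subst cong_small_iff) auto
      from this[of 0] this[of 1] this[of 2] show ?thesis by (simp add: I J)
    qed (simp_all add: I J small cong_add_lcancel add.assoc)
  qed
  then show ?thesis by (subst (1 2) p) (simp add: sw_periodic)
qed

lemma sw_braid:
  assumes "n \<ge> 3" "i < n" "j < n" "adjacent_letters n i j"
  shows "sw n i \<circ> sw n j \<circ> sw n i = sw n j \<circ> sw n i \<circ> sw n j"
proof -
  consider "[int j = int i + 1] (mod int n)" | "[int i = int j + 1] (mod int n)"
    using assms(1,4) by (auto simp: adjacent_letters_iff_cong)
  then show ?thesis
  proof cases
    case 1
    then show ?thesis using sw_braid_succ[OF assms(1-3)] by (simp add: fun_eq_iff)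
  next
    case 2
    then show ?thesis using sw_braid_succ[OF assms(1) assms(3,2)] by (simp add: fun_eq_iff)
  qed
qed

lemma sw_fixes:
  assumes "i < n" "\<not> [p = int i] (mod int n)" "\<not> [p = int i + 1] (mod int n)"
  shows "sw n i p = p"
  using assms sw_altdef[OF assms(1) cong_refl] by simp

lemma sw_stays:
  assumes "i < n" "[p = int i] (mod int n) \<or> [p = int i + 1] (mod int n)"
  shows "[sw n i p = int i] (mod int n) \<or> [sw n i p = int i + 1] (mod int n)"
proof (cases "[p = int i] (mod int n)")
  case True
  then show ?thesis using sw_altdef[OF assms(1) cong_refl] by (simp add: cong_add_rcancel)
next
  case False
  with assms(2) have "[p = int i + 1] (mod int n)" by simp
  moreover from this have "[p - 1 = int i] (mod int n)"
    by (metis cong_add_rcancel diff_add_cancel)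
  ultimately show ?thesis using False sw_altdef[OF assms(1) cong_refl] by simp
qed

lemma sw_commute:
  assumes "i < n" "j < n"
    and "\<not> [int i = int j] (mod int n)" "\<not> [int i = int j + 1] (mod int n)"
        "\<not> [int j = int i + 1] (mod int n)"
  shows "sw n i (sw n j p) = sw n j (sw n i p)"
proof -
  define moved where "moved k x \<longleftrightarrow> [x = int k] (mod int n) \<or> [x = int k + 1] (mod int n)" for k x
  have fixed: "sw n k x = x" if "k < n" "\<not> moved k x" for k x
    using that sw_fixes by (simp add: moved_def)
  have stay: "moved k (sw n k x)" if "k < n" "moved k x" for k x
    using that sw_stays by (simp add: moved_def)
  have same: "[a = b] (mod int n)" if "[x = a] (mod int n)" "[x = b] (mod int n)" for x a b :: int
    using that by (metis cong_sym cong_trans)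
  have disjoint: "\<not> (moved i x \<and> moved j x)" for x
  proof
    assume "moved i x \<and> moved j x"
    then consider "[x = int i] (mod int n)" "[x = int j] (mod int n)"
      | "[x = int i] (mod int n)" "[x = int j + 1] (mod int n)"
      | "[x = int j] (mod int n)" "[x = int i + 1] (mod int n)"
      | "[x = int i + 1] (mod int n)" "[x = int j + 1] (mod int n)"
      unfolding moved_def by blast
    then show False
    proof cases
      case 1
      then show False using same[OF 1] assms(3) by simp
    next
      case 2
      then show False using same[OF 2] assms(4) by simp
    next
      case 3
      then show False using same[OF 3] assms(5) by simp
    next
      case 4
      then show False using same[OF 4] assms(3) by (simp add: cong_add_rcancel)
    qed
  qed
  consider "moved i p" | "moved j p" | "\<not> moved i p" "\<not> moved j p" by blast
  then show ?thesis
  proof cases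
    case 1
    then have "\<not> moved j p" "\<not> moved j (sw n i p)"
      using disjoint stay[OF assms(1)] by blast+
    then show ?thesis by (simp add: fixed assms(2))
  next
    case 2
    then have "\<not> moved i p" "\<not> moved i (sw n j p)"
      using disjoint stay[OF assms(2)] by blast+
    then show ?thesis by (simp add: fixed assms(1))
  qed (simp add: fixed assms)
qed

section \<open>Column labellings and chamber labels\<close>

definition affine_perm :: "nat \<Rightarrow> (int \<Rightarrow> int) \<Rightarrow> bool" where
  "affine_perm n f \<longleftrightarrow> inj f \<and> (\<forall>p. f (p + int n) = f p + int n)"

lemma affine_perm_id: "affine_perm n id"
  by (simp add: affine_perm_def)

lemma affine_perm_sw: "n \<ge> 2 \<Longrightarrow> i < n \<Longrightarrow> affine_perm n (sw n i)"
  unfolding affine_perm_def by (metis injI sw_involutive sw_periodic mult_1_right)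

lemma affine_perm_comp: "affine_perm n f \<Longrightarrow> affine_perm n g \<Longrightarrow> affine_perm n (f \<circ> g)"
  unfolding affine_perm_def by (simp add: inj_compose)

lemma affine_perm_shift:
  assumes "affine_perm n f"
  shows "f (p + int n * c) = f p + int n * c"
proof -
  have per: "f (x + int n) = f x + int n" for x
    using assms by (simp add: affine_perm_def)
  show ?thesis
  proof (induction c rule: int_induct[where k = 0])
    case (step1 c)
    have "f (p + int n * (c + 1)) = f ((p + int n * c) + int n)" by (simp add: algebra_simps)
    also have "\<dots> = f (p + int n * c) + int n" by (rule per)
    also have "\<dots> = f p + int n * (c + 1)" using step1 by (simp add: algebra_simps)
    finally show ?case .
  next
    case (step2 c)
    have "f (p + int n * (c - 1)) + int n = f (p + int n * (c - 1) + int n)" by (rule per[symmetric])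
    also have "\<dots> = f (p + int n * c)" by (simp add: algebra_simps)
    also have "\<dots> = f p + int n * c" by (rule step2)
    finally show ?case by (simp add: algebra_simps)
  qed simp
qed

lemma affine_perm_cong_iff:
  assumes "affine_perm n f"
  shows "[f p = f q] (mod int n) \<longleftrightarrow> [p = q] (mod int n)"
proof
  assume "[p = q] (mod int n)"
  then obtain c where "q = p + int n * c" by (auto simp: cong_iff_lin)
  then show "[f p = f q] (mod int n)"
    using affine_perm_shift[OF assms] by (auto simp: cong_iff_lin)
next
  assume "[f p = f q] (mod int n)"
  then obtain c where "f q = f p + int n * c" by (auto simp: cong_iff_lin)
  then have "f q = f (p + int n * c)" using affine_perm_shift[OF assms] by simp
  then have "q = p + int n * c" using assms by (simp add: affine_perm_def inj_eq)
  then show "[p = q] (mod int n)" by (auto simp: cong_iff_lin)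
qed

lemma affine_perm_less_cong:
  assumes "affine_perm n f" "[f q = f p] (mod int n)" "q < p"
  shows "f q \<le> f p - int n"
proof -
  obtain c where c: "p = q + int n * c"
    using assms(2) affine_perm_cong_iff[OF assms(1)] by (auto simp: cong_iff_lin)
  with assms(3) have "c \<ge> 1" by (simp add: zero_less_mult_iff)
  then have "int n * c \<ge> int n" by (simp add: mult_le_cancel_left1)
  with c affine_perm_shift[OF assms(1)] show ?thesis by simp
qed

lemma resid_range: "n > 0 \<Longrightarrow> resid n b \<in> {1..n}"
proof -
  assume "n > 0"
  then have "0 \<le> b mod int n" "b mod int n < int n" by simp_all
  then show ?thesis by (auto simp: resid_def nat_le_iff le_nat_iff)
qed

lemma resid_eq_iff: "n > 0 \<Longrightarrow> resid n b = resid n c \<longleftrightarrow> [b = c] (mod int n)"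
proof -
  assume "n > 0"
  then have "0 \<le> b mod int n" "b mod int n < int n" "0 \<le> c mod int n" "c mod int n < int n" by auto
  then show ?thesis unfolding resid_def cong_def
    by (cases "b mod int n = 0"; cases "c mod int n = 0") (auto simp del: pos_mod_bound pos_mod_sign)
qed

definition chamber_below :: "nat \<Rightarrow> (int \<Rightarrow> int) \<Rightarrow> int \<Rightarrow> nat \<Rightarrow> int" where
  "chamber_below n f p = chamber_label n {f q | q. q < p}"

lemma chamber_below_zvec: "chamber_below n f p \<in> zvec n"
  by (simp add: chamber_below_def chamber_label_def zvec_def)

lemma vadd_uvec_zvec: "s \<in> zvec n \<Longrightarrow> r \<in> {1..n} \<Longrightarrow> vadd s (uvec r) \<in> zvec n"
  by (auto simp: zvec_def vadd_def uvec_def)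

lemma greatest_lift_below:
  assumes n: "n > 0" and f: "affine_perm n f" and p: "p' < p" "p \<le> p' + int n"
  shows "(GREATEST b. b \<in> {f q | q. q < p} \<and> resid n b = resid n (f p')) = f p'"
proof (rule Greatest_equality)
  show "f p' \<in> {f q | q. q < p} \<and> resid n (f p') = resid n (f p')" using p by auto
next
  fix b assume "b \<in> {f q | q. q < p} \<and> resid n b = resid n (f p')"
  then obtain q where q: "b = f q" "q < p" "[q = p'] (mod int n)"
    using resid_eq_iff[OF n] affine_perm_cong_iff[OF f] by blast
  have "\<not> p' < q" using cong_less_imp_add_le[OF q(3)] q(2) p by fastforce
  then consider "q < p'" | "q = p'" by linarith
  then show "b \<le> f p'"
  proof cases
    case 1
    then show ?thesis using q affine_perm_less_cong[OF f] affine_perm_cong_iff[OF f] by fastforce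
  qed (use q in simp)
qed

lemma chamber_below_succ:
  assumes n: "n > 0" and f: "affine_perm n f"
  shows "chamber_below n f (p + 1) = vadd (chamber_below n f p) (uvec (resid n (f p)))"
proof
  fix r
  show "chamber_below n f (p + 1) r = vadd (chamber_below n f p) (uvec (resid n (f p))) r"
  proof (cases "r = resid n (f p)")
    case True
    have shift: "f (p - int n) = f p - int n" using affine_perm_shift[OF f, of p "-1"] by simp
    then have "r = resid n (f (p - int n))"
      using True resid_eq_iff[OF n] by (auto simp: cong_iff_lin intro: exI[of _ "-1"])
    then have "(GREATEST b. b \<in> {f q | q. q < p} \<and> resid n b = r) = f p - int n"
      using greatest_lift_below[OF n f, of "p - int n" p] n shift by simp
    moreover have "(GREATEST b. b \<in> {f q | q. q < p + 1} \<and> resid n b = r) = f p"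
      unfolding True by (rule greatest_lift_below[OF n f]) (use n in auto)
    moreover have "real_of_int (f p - int n) / real n = real_of_int (f p) / real n - 1"
      using n by (simp add: field_simps)
    ultimately show ?thesis using True resid_range[OF n]
      by (simp add: chamber_below_def chamber_label_def vadd_def uvec_def)
  next
    case False
    have "b \<in> {f q | q. q < p + 1} \<and> resid n b = r \<longleftrightarrow> b \<in> {f q | q. q < p} \<and> resid n b = r" for b
      using False by (auto simp: zless_add1_eq) (metis le_less)
    with False show ?thesis by (simp add: chamber_below_def chamber_label_def vadd_def uvec_def)
  qed
qed

lemma chamber_below_comp_sw:
  assumes "n \<ge> 2" "i < n" "\<not> [p = int i + 1] (mod int n)"
  shows "chamber_below n (f \<circ> sw n i) p = chamber_below n f p"
proof -
  have below: "sw n i q < p" if "q < p" for q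
  proof (rule ccontr)
    assume "\<not> sw n i q < p"
    with that sw_le_succ[of n i q] have "q = p - 1" "sw n i q = q + 1" by linarith+
    with sw_succ_imp_cong[of n i q] assms(3) show False
      by (metis cong_add_rcancel diff_add_cancel)
  qed
  have "{(f \<circ> sw n i) q | q. q < p} = {f q | q. q < p}"
  proof (intro equalityI subsetI)
    fix b assume "b \<in> {f q | q. q < p}"
    then obtain q where "b = f q" "q < p" by auto
    then have "b = (f \<circ> sw n i) (sw n i q)" "sw n i q < p"
      using below sw_involutive[OF assms(1,2)] by auto
    then show "b \<in> {(f \<circ> sw n i) q | q. q < p}" by blast
  qed (use below in auto)
  then show ?thesis by (simp add: chamber_below_def)
qed

section \<open>Weights of a braid triangle\<close>

definition bhz_weight :: "(nat \<Rightarrow> real) \<Rightarrow> ((nat \<Rightarrow> int) \<Rightarrow> real) \<Rightarrow> nat \<Rightarrow> nat \<Rightarrow> (nat \<Rightarrow> int) \<Rightarrow> real" where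
  "bhz_weight \<alpha> \<tau> i j s = (\<alpha> i - \<alpha> j) * \<tau> s * \<tau> (vadd (vadd s (uvec i)) (uvec j))
     / (\<tau> (vadd s (uvec i)) * \<tau> (vadd s (uvec j)))"

definition crossing_weight_at :: "nat \<Rightarrow> (nat \<Rightarrow> real) \<Rightarrow> ((nat \<Rightarrow> int) \<Rightarrow> real) \<Rightarrow> (int \<Rightarrow> int) \<Rightarrow> int \<Rightarrow> real" where
  "crossing_weight_at n \<alpha> \<tau> g p =
     bhz_weight \<alpha> \<tau> (resid n (g (p + 1))) (resid n (g p)) (chamber_below n g p)"

lemma crossing_weight_eq: "crossing_weight n \<alpha> \<tau> L t p = crossing_weight_at n \<alpha> \<tau> (L t) p"
  by (simp add: crossing_weight_def crossing_weight_at_def bhz_weight_def chamber_below_def Let_def)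

lemma crossing_weight_at_comp_sw:
  assumes "n \<ge> 2" "i < n" and far: "\<not> [p = int i] (mod int n)" "\<not> [p = int i + 1] (mod int n)"
    "\<not> [p + 1 = int i] (mod int n)"
  shows "crossing_weight_at n \<alpha> \<tau> (f \<circ> sw n i) p = crossing_weight_at n \<alpha> \<tau> f p"
proof -
  have "sw n i p = p" "sw n i (p + 1) = p + 1"
    using far sw_fixes[OF assms(2)] by (simp_all add: cong_add_rcancel)
  then show ?thesis
    using chamber_below_comp_sw[OF assms(1,2) far(2)] by (simp add: crossing_weight_at_def)
qed

lemma crossing_weight_at_commuting:
  assumes "n \<ge> 2" "i < n" "commuting_letters n i j" "[p = int j] (mod int n)"
  shows "crossing_weight_at n \<alpha> \<tau> (f \<circ> sw n i) p = crossing_weight_at n \<alpha> \<tau> f p"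
proof (rule crossing_weight_at_comp_sw[OF assms(1,2)])
  have "\<not> [int j = int i] (mod int n)" "\<not> [int j = int i + 1] (mod int n)"
    "\<not> [int j + 1 = int i] (mod int n)"
    using assms(1,3) by (auto simp: commuting_letters_iff_cong cong_sym_eq)
  then show "\<not> [p = int i] (mod int n)" "\<not> [p = int i + 1] (mod int n)"
    "\<not> [p + 1 = int i] (mod int n)"
    using assms(4) cong_add_rcancel[of p 1 "int j" "int n"]
    by (metis cong_trans cong_sym)+
qed

definition braid_weights :: "real \<times> real \<times> real \<Rightarrow> real \<times> real \<times> real" where
  "braid_weights = (\<lambda>(a, b, c). (b * c / (a + c), a + c, a * b / (a + c)))"

text \<open>\<open>(A1, B1, C1)\<close> and \<open>(A2, B2, C2)\<close> are the weights of the two readings of a braid triangle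
  whose wires have residues \<open>x, y, z\<close>, as computed in \<open>braid_triangle_crossings\<close>.\<close>

lemma braid_weights_three_term:
  fixes x y z A X Y Z XY XZ YZ XYZ :: real
  assumes nonzero: "A \<noteq> 0" "X \<noteq> 0" "Y \<noteq> 0" "Z \<noteq> 0" "XY \<noteq> 0" "XZ \<noteq> 0" "YZ \<noteq> 0" "XYZ \<noteq> 0"
    and three_term: "(x - y) * Z * XY + (y - z) * X * YZ + (z - x) * Y * XZ = 0"
  defines "A1 \<equiv> (y - x) * A * XY / (Y * X)" and "B1 \<equiv> (z - x) * Y * XYZ / (YZ * XY)"
    and "C1 \<equiv> (z - y) * A * YZ / (Z * Y)"
    and "A2 \<equiv> (z - y) * X * XYZ / (XZ * XY)" and "B2 \<equiv> (z - x) * A * XZ / (X * Z)"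
    and "C2 \<equiv> (y - x) * Z * XYZ / (XZ * YZ)"
  shows "A1 + C1 \<noteq> 0 \<Longrightarrow> (A2, B2, C2) = braid_weights (A1, B1, C1)"
    and "A2 + C2 \<noteq> 0 \<Longrightarrow> (A1, B1, C1) = braid_weights (A2, B2, C2)"
proof -
  have three_term': "(y - x) * Z * XY + (z - y) * X * YZ = (z - x) * Y * XZ"
    using three_term by (simp add: algebra_simps)
  have "A1 + C1 = A * ((y - x) * Z * XY + (z - y) * X * YZ) / (X * Y * Z)"
    unfolding A1_def C1_def using nonzero by (simp add: field_simps)
  also have "\<dots> = B2"
    unfolding three_term' B2_def using nonzero by (simp add: field_simps)
  finally have sum1: "A1 + C1 = B2" .
  have "A2 + C2 = XYZ * ((y - x) * Z * XY + (z - y) * X * YZ) / (XZ * XY * YZ)"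
    unfolding A2_def C2_def using nonzero by (simp add: field_simps)
  also have "\<dots> = B1"
    unfolding three_term' B1_def using nonzero by (simp add: field_simps)
  finally have sum2: "A2 + C2 = B1" .
  have prod1: "A2 * B2 = B1 * C1" and prod2: "A1 * B1 = B2 * C2"
    unfolding A1_def B1_def C1_def A2_def B2_def C2_def using nonzero by (simp_all add: field_simps)
  show "A1 + C1 \<noteq> 0 \<Longrightarrow> (A2, B2, C2) = braid_weights (A1, B1, C1)"
    using sum1 prod1 prod2 by (simp add: braid_weights_def field_simps)
  show "A2 + C2 \<noteq> 0 \<Longrightarrow> (A1, B1, C1) = braid_weights (A2, B2, C2)"
    using sum2 prod1 prod2 by (simp add: braid_weights_def field_simps)
qed

lemma braid_triangle_sw:
  assumes n: "n \<ge> 3" and uv: "u < n" "v < n"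
    and u: "[int u = m] (mod int n)" and v: "[int v = m + 1] (mod int n)"
  shows "sw n u m = m + 1" "sw n u (m + 1) = m" "sw n u (m + 2) = m + 2"
    "sw n v m = m" "sw n v (m + 1) = m + 2" "sw n v (m + 2) = m + 1"
proof -
  from not_cong_add_small[OF n, of 1 0 m]
    not_cong_add_small[OF n, of 2 0 m]
    not_cong_add_small[OF n, of 2 1 m]
    not_cong_add_small[OF n, of 0 1 m]
    not_cong_add_small[OF n, of 0 2 m]
  have "\<not> [m + 1 = m] (mod int n)" "\<not> [m + 2 = m] (mod int n)" "\<not> [m + 2 = m + 1] (mod int n)"
    "\<not> [m = m + 1] (mod int n)" "\<not> [m = m + 2] (mod int n)" by simp_all
  then show "sw n u m = m + 1" "sw n u (m + 1) = m" "sw n u (m + 2) = m + 2"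
    "sw n v m = m" "sw n v (m + 1) = m + 2" "sw n v (m + 2) = m + 1"
    using sw_altdef[OF uv(2) v] by (simp_all add: sw_altdef[OF uv(1) u] add.assoc)
qed

lemma braid_triangle_crossings:
  assumes n: "n \<ge> 3" and f: "affine_perm n f" and uv: "u < n" "v < n"
    and u: "[int u = m] (mod int n)" and v: "[int v = m + 1] (mod int n)"
  defines "x \<equiv> resid n (f m)" and "y \<equiv> resid n (f (m + 1))" and "z \<equiv> resid n (f (m + 2))"
    and "s \<equiv> chamber_below n f m"
  shows "crossing_weight_at n \<alpha> \<tau> f m = bhz_weight \<alpha> \<tau> y x s"
    "crossing_weight_at n \<alpha> \<tau> (f \<circ> sw n u) (m + 1) = bhz_weight \<alpha> \<tau> z x (vadd s (uvec y))"
    "crossing_weight_at n \<alpha> \<tau> (f \<circ> sw n u \<circ> sw n v) m = bhz_weight \<alpha> \<tau> z y s"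
    "crossing_weight_at n \<alpha> \<tau> f (m + 1) = bhz_weight \<alpha> \<tau> z y (vadd s (uvec x))"
    "crossing_weight_at n \<alpha> \<tau> (f \<circ> sw n v) m = bhz_weight \<alpha> \<tau> z x s"
    "crossing_weight_at n \<alpha> \<tau> (f \<circ> sw n v \<circ> sw n u) (m + 1) = bhz_weight \<alpha> \<tau> y x (vadd s (uvec z))"
proof -
  note S = braid_triangle_sw[OF n uv u v]
  have n2: "n \<ge> 2" and n0: "n > 0" using n by auto
  have perm: "affine_perm n (f \<circ> sw n u)" "affine_perm n (f \<circ> sw n v)"
    using affine_perm_comp[OF f] affine_perm_sw[OF n2] uv by auto
  have u1: "[int u + 1 = m + 1] (mod int n)" and v1: "[int v + 1 = m + 2] (mod int n)"
    using u v cong_add_rcancel[of "int v" 1 "m + 1"] by (simp_all add: cong_add_rcancel add.assoc)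
  have "\<not> [m = int u + 1] (mod int n)"
    using cong_trans[OF _ u1] not_cong_add_small[OF n, of 0 1 m] by auto
  moreover have "\<not> [m = int v + 1] (mod int n)"
    using cong_trans[OF _ v1] not_cong_add_small[OF n, of 0 2 m] by auto
  ultimately
  have chamber: "chamber_below n (f \<circ> sw n u) m = s" "chamber_below n (f \<circ> sw n v) m = s"
    "chamber_below n (f \<circ> sw n u \<circ> sw n v) m = s" "chamber_below n (f \<circ> sw n v \<circ> sw n u) m = s"
    using chamber_below_comp_sw[OF n2 uv(1)] chamber_below_comp_sw[OF n2 uv(2)] s_def
    by (metis comp_assoc)+
  have m2: "m + 1 + 1 = m + 2" by simp
  show "crossing_weight_at n \<alpha> \<tau> f m = bhz_weight \<alpha> \<tau> y x s"
    by (simp add: crossing_weight_at_def x_def y_def s_def)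
  show "crossing_weight_at n \<alpha> \<tau> f (m + 1) = bhz_weight \<alpha> \<tau> z y (vadd s (uvec x))"
    unfolding crossing_weight_at_def m2
    using chamber_below_succ[OF n0 f, of m] by (simp add: x_def y_def z_def s_def)
  show "crossing_weight_at n \<alpha> \<tau> (f \<circ> sw n u) (m + 1) = bhz_weight \<alpha> \<tau> z x (vadd s (uvec y))"
    unfolding crossing_weight_at_def m2
    using chamber_below_succ[OF n0 perm(1), of m] chamber S by (simp add: x_def y_def z_def)
  show "crossing_weight_at n \<alpha> \<tau> (f \<circ> sw n v) m = bhz_weight \<alpha> \<tau> z x s"
    using chamber S by (simp add: crossing_weight_at_def x_def z_def)
  show "crossing_weight_at n \<alpha> \<tau> (f \<circ> sw n u \<circ> sw n v) m = bhz_weight \<alpha> \<tau> z y s"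
    using chamber S by (simp add: crossing_weight_at_def y_def z_def)
  show "crossing_weight_at n \<alpha> \<tau> (f \<circ> sw n v \<circ> sw n u) (m + 1) = bhz_weight \<alpha> \<tau> y x (vadd s (uvec z))"
    unfolding crossing_weight_at_def m2
    using chamber_below_succ[OF n0 affine_perm_comp[OF perm(2) affine_perm_sw[OF n2 uv(1)]], of m]
      chamber S by (simp add: x_def y_def z_def)
qed

lemma braid_triangle_weights:
  assumes n: "n \<ge> 3" and f: "affine_perm n f" and uv: "u < n" "v < n"
    and u: "[int u = m] (mod int n)" and v: "[int v = m + 1] (mod int n)"
    and bhz: "BHZ n \<alpha> \<tau>" and nonzero: "\<forall>s\<in>zvec n. \<tau> s \<noteq> 0"
  defines "W \<equiv> crossing_weight_at n \<alpha> \<tau>"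
  shows "W f m + W (f \<circ> sw n u \<circ> sw n v) m \<noteq> 0 \<Longrightarrow>
      (W f (m + 1), W (f \<circ> sw n v) m, W (f \<circ> sw n v \<circ> sw n u) (m + 1))
      = braid_weights (W f m, W (f \<circ> sw n u) (m + 1), W (f \<circ> sw n u \<circ> sw n v) m)"
    and "W f (m + 1) + W (f \<circ> sw n v \<circ> sw n u) (m + 1) \<noteq> 0 \<Longrightarrow>
      (W f m, W (f \<circ> sw n u) (m + 1), W (f \<circ> sw n u \<circ> sw n v) m)
      = braid_weights (W f (m + 1), W (f \<circ> sw n v) m, W (f \<circ> sw n v \<circ> sw n u) (m + 1))"
proof -
  define x where "x = resid n (f m)"
  define y where "y = resid n (f (m + 1))"
  define z where "z = resid n (f (m + 2))"
  define s where "s = chamber_below n f m"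
  note C = braid_triangle_crossings[OF n f uv u v, of \<alpha> \<tau>, folded x_def y_def z_def s_def W_def]
  have n0: "n > 0" using n by simp
  have distinct: "x \<noteq> y" "y \<noteq> z" "x \<noteq> z"
    using not_cong_add_small[OF n, of 0 1 m] not_cong_add_small[OF n, of 1 2 m]
      not_cong_add_small[OF n, of 0 2 m]
    unfolding x_def y_def z_def resid_eq_iff[OF n0] affine_perm_cong_iff[OF f] by auto
  have range: "x \<in> {1..n}" "y \<in> {1..n}" "z \<in> {1..n}"
    using resid_range[OF n0] unfolding x_def y_def z_def by auto
  have s: "s \<in> zvec n" unfolding s_def by (rule chamber_below_zvec)
  let ?ex = "uvec x" and ?ey = "uvec y" and ?ez = "uvec z"
  have in_zvec: "vadd s ?ex \<in> zvec n" "vadd s ?ey \<in> zvec n" "vadd s ?ez \<in> zvec n"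
    "vadd (vadd s ?ex) ?ey \<in> zvec n" "vadd (vadd s ?ex) ?ez \<in> zvec n" "vadd (vadd s ?ey) ?ez \<in> zvec n"
    "vadd (vadd (vadd s ?ex) ?ey) ?ez \<in> zvec n"
    using vadd_uvec_zvec s range by blast+
  have three_term: "(\<alpha> x - \<alpha> y) * \<tau> (vadd s ?ez) * \<tau> (vadd (vadd s ?ex) ?ey)
      + (\<alpha> y - \<alpha> z) * \<tau> (vadd s ?ex) * \<tau> (vadd (vadd s ?ey) ?ez)
      + (\<alpha> z - \<alpha> x) * \<tau> (vadd s ?ey) * \<tau> (vadd (vadd s ?ex) ?ez) = 0"
    using bhz distinct s range unfolding BHZ_def by blast
  note T = braid_weights_three_term[OF _ _ _ _ _ _ _ _ three_term]
  note nz = nonzero[rule_format, OF s] nonzero[rule_format, OF in_zvec(1)] nonzero[rule_format, OF in_zvec(2)]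
    nonzero[rule_format, OF in_zvec(3)] nonzero[rule_format, OF in_zvec(4)]
    nonzero[rule_format, OF in_zvec(5)] nonzero[rule_format, OF in_zvec(6)]
    nonzero[rule_format, OF in_zvec(7)]
  have swap: "vadd (vadd s a) b = vadd (vadd s b) a" "vadd (vadd (vadd s a) b) c = vadd (vadd (vadd s a) c) b"
    for a b c by (auto simp: vadd_def)
  show "W f m + W (f \<circ> sw n u \<circ> sw n v) m \<noteq> 0 \<Longrightarrow>
      (W f (m + 1), W (f \<circ> sw n v) m, W (f \<circ> sw n v \<circ> sw n u) (m + 1))
      = braid_weights (W f m, W (f \<circ> sw n u) (m + 1), W (f \<circ> sw n u \<circ> sw n v) m)"
    using T(1)[OF nz] unfolding C bhz_weight_def by (simp add: swap mult.commute)
  show "W f (m + 1) + W (f \<circ> sw n v \<circ> sw n u) (m + 1) \<noteq> 0 \<Longrightarrow>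
      (W f m, W (f \<circ> sw n u) (m + 1), W (f \<circ> sw n u \<circ> sw n v) m)
      = braid_weights (W f (m + 1), W (f \<circ> sw n v) m, W (f \<circ> sw n v \<circ> sw n u) (m + 1))"
    using T(2)[OF nz] unfolding C bhz_weight_def by (simp add: swap mult.commute)
qed

lemma braid_move_weights:
  fixes n :: nat and \<alpha> :: "nat \<Rightarrow> real" and \<tau> :: "(nat \<Rightarrow> int) \<Rightarrow> real"
    and a0 a1 a2 b0 b1 b2 :: real
  defines "W \<equiv> crossing_weight_at n \<alpha> \<tau>"
  assumes n: "n \<ge> 3" and bhz: "BHZ n \<alpha> \<tau>" and nonzero: "\<forall>s\<in>zvec n. \<tau> s \<noteq> 0"
    and f: "affine_perm n f" and ij: "i < n" "j < n" and adj: "adjacent_letters n i j"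
    and old: "\<And>p. [p = int i] (mod int n) \<Longrightarrow> a0 = W f p"
      "\<And>p. [p = int j] (mod int n) \<Longrightarrow> a1 = W (f \<circ> sw n i) p"
      "\<And>p. [p = int i] (mod int n) \<Longrightarrow> a2 = W (f \<circ> sw n i \<circ> sw n j) p"
    and ne: "a0 + a2 \<noteq> 0" and new: "(b0, b1, b2) = braid_weights (a0, a1, a2)"
  shows "[p = int j] (mod int n) \<Longrightarrow> b0 = W f p"
    and "[p = int i] (mod int n) \<Longrightarrow> b1 = W (f \<circ> sw n j) p"
    and "[p = int j] (mod int n) \<Longrightarrow> b2 = W (f \<circ> sw n j \<circ> sw n i) p"
proof -
  note triangle = braid_triangle_weights[OF n f _ _ _ _ bhz nonzero, folded W_def]
  consider "[int j = int i + 1] (mod int n)" | "[int i = int j + 1] (mod int n)"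
    using adj n by (auto simp: adjacent_letters_iff_cong)
  \<comment> \<open>the old letters \<open>i, j, i\<close> read the triangle at \<open>m \<equiv> i\<close> lower crossing first if \<open>j \<equiv> i + 1\<close>,
    and the triangle at \<open>m \<equiv> j\<close> upper crossing first if \<open>i \<equiv> j + 1\<close>\<close>
  then have "([p = int j] (mod int n) \<longrightarrow> b0 = W f p) \<and> ([p = int i] (mod int n) \<longrightarrow> b1 = W (f \<circ> sw n j) p)
    \<and> ([p = int j] (mod int n) \<longrightarrow> b2 = W (f \<circ> sw n j \<circ> sw n i) p)"
  proof cases
    case 1
    have lower_first: "(b0, b1, b2) = (W f (m + 1), W (f \<circ> sw n j) m, W (f \<circ> sw n j \<circ> sw n i) (m + 1))"
      if "[int i = m] (mod int n)" for m
    proof -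
      have j: "[int j = m + 1] (mod int n)" using 1 that by (metis cong_add_rcancel cong_trans)
      have "a0 = W f m" "a1 = W (f \<circ> sw n i) (m + 1)" "a2 = W (f \<circ> sw n i \<circ> sw n j) m"
        using old that j by (simp_all add: cong_sym_eq)
      then show ?thesis using triangle(1)[OF ij that j] ne new by simp
    qed
    have "[int i = p - 1] (mod int n)" if "[p = int j] (mod int n)"
      using cong_trans[OF that 1] by (simp add: cong_pred_iff)
    then show ?thesis
      using lower_first[of "p - 1"] lower_first[of p] by (auto simp: cong_sym_eq)
  next
    case 2
    have upper_first: "(b0, b1, b2) = (W f m, W (f \<circ> sw n j) (m + 1), W (f \<circ> sw n j \<circ> sw n i) m)"
      if "[int j = m] (mod int n)" for m
    proof -
      have i: "[int i = m + 1] (mod int n)" using 2 that by (metis cong_add_rcancel cong_trans)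
      have "a0 = W f (m + 1)" "a1 = W (f \<circ> sw n i) m" "a2 = W (f \<circ> sw n i \<circ> sw n j) (m + 1)"
        using old that i by (simp_all add: cong_sym_eq)
      then show ?thesis using triangle(2)[OF ij(2,1) that i] ne new by simp
    qed
    have "[int j = p - 1] (mod int n)" if "[p = int i] (mod int n)"
      using cong_trans[OF that 2] by (simp add: cong_pred_iff)
    then show ?thesis
      using upper_first[of "p - 1"] upper_first[of p] by (auto simp: cong_sym_eq)
  qed
  then show "[p = int j] (mod int n) \<Longrightarrow> b0 = W f p"
    and "[p = int i] (mod int n) \<Longrightarrow> b1 = W (f \<circ> sw n j) p"
    and "[p = int j] (mod int n) \<Longrightarrow> b2 = W (f \<circ> sw n j \<circ> sw n i) p" by blast+
qed

section \<open>Weighted moves\<close>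

lemma weights_given_iff_cong:
  assumes "\<forall>t. w t < n"
  shows "weights_given n \<alpha> \<tau> w a L \<longleftrightarrow>
    (\<forall>t p. [p = int (w t)] (mod int n) \<longrightarrow> a t = crossing_weight_at n \<alpha> \<tau> (L t) p)"
proof -
  have "p mod int n = int (w t) \<longleftrightarrow> [p = int (w t)] (mod int n)" for t p
    using assms by (intro mod_eq_iff_cong) auto
  then show ?thesis by (simp add: weights_given_def crossing_weight_eq)
qed

lemma labels_consistent_prev:
  assumes "n \<ge> 2" "w t < n" "labels_consistent n w L"
  shows "L t = L (t + 1) \<circ> sw n (w t)"
  using assms sw_involutive[OF assms(1,2)] by (auto simp: labels_consistent_def fun_eq_iff)

lemma labels_consistent_affine_perm:
  assumes n: "n \<ge> 2" and w: "\<forall>t. w t < n" and L: "labels_consistent n w L"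
    and t0: "affine_perm n (L t0)"
  shows "affine_perm n (L t)"
proof (induction t rule: int_induct[where k = t0])
  case (step1 t)
  then show ?case
    using L affine_perm_comp[OF _ affine_perm_sw[OF n]] w unfolding labels_consistent_def by metis
next
  case (step2 t)
  then show ?case
    using labels_consistent_prev[OF n _ L, of "t - 1"] affine_perm_comp[OF _ affine_perm_sw[OF n]] w
    by (metis diff_add_cancel)
qed (rule t0)

lemma labels_consistent_agree_outside:
  assumes n: "n \<ge> 2" and w: "\<forall>t. w t < n" and L: "labels_consistent n w L"
    and L': "labels_consistent n w' L'"
    and w': "\<And>t. t < k \<or> k + d \<le> t \<Longrightarrow> w' t = w t"
    and left: "L' k = L k" and right: "L' (k + d) = L (k + d)"
    and t: "t < k \<or> k + d \<le> t"
  shows "L' t = L t"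
  using t
proof
  assume "t < k"
  then have "t \<le> k" by simp
  then show ?thesis
  proof (induction t rule: int_le_induct)
    case (step i)
    then have "w' (i - 1) = w (i - 1)" using w' by simp
    with step w show ?case
      using labels_consistent_prev[OF n _ L, of "i - 1"] labels_consistent_prev[OF n _ L', of "i - 1"]
      by simp
  qed (rule left)
next
  assume "k + d \<le> t"
  then show ?thesis
  proof (induction t rule: int_ge_induct)
    case (step i)
    then show ?case using L L' w' by (simp add: labels_consistent_def)
  qed (rule right)
qed

definition bhz_diagram :: "nat \<Rightarrow> (nat \<Rightarrow> real) \<Rightarrow> ((nat \<Rightarrow> int) \<Rightarrow> real)
    \<Rightarrow> (int \<Rightarrow> nat) \<times> (int \<Rightarrow> real) \<times> (int \<Rightarrow> int \<Rightarrow> int) \<Rightarrow> bool" where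
  "bhz_diagram n \<alpha> \<tau> C \<longleftrightarrow> (case C of (w, a, L) \<Rightarrow>
     (\<forall>t. w t < n) \<and> labels_consistent n w L \<and> (\<forall>t. affine_perm n (L t)) \<and>
     weights_given n \<alpha> \<tau> w a L)"

lemma braid_move_preserves_bhz_diagram:
  assumes n: "n \<ge> 3" and bhz: "BHZ n \<alpha> \<tau>" and nonzero: "\<forall>s\<in>zvec n. \<tau> s \<noteq> 0"
    and D: "bhz_diagram n \<alpha> \<tau> (w, a, L)"
    and L': "labels_consistent n w' L'" and left: "L' k = L k"
    and adj: "adjacent_letters n (w k) (w (k + 1))" and w2: "w (k + 2) = w k"
    and ne: "a k + a (k + 2) \<noteq> 0"
    and w': "w' = w(k := w (k + 1), k + 1 := w k, k + 2 := w (k + 1))"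
    and a': "a' = a(k := a (k + 1) * a (k + 2) / (a k + a (k + 2)),
                k + 1 := a k + a (k + 2),
                k + 2 := a k * a (k + 1) / (a k + a (k + 2)))"
  shows "bhz_diagram n \<alpha> \<tau> (w', a', L')"
proof -
  have n2: "n \<ge> 2" using n by simp
  have w: "\<forall>t. w t < n" and L: "labels_consistent n w L" and perm: "\<forall>t. affine_perm n (L t)"
    and old: "\<And>t p. [p = int (w t)] (mod int n) \<Longrightarrow> a t = crossing_weight_at n \<alpha> \<tau> (L t) p"
    using D by (auto simp: bhz_diagram_def weights_given_iff_cong)
  define i j f where "i = w k" and "j = w (k + 1)" and "f = L k"
  have ij: "i < n" "j < n" using w by (simp_all add: i_def j_def)
  have w'_lt: "\<forall>t. w' t < n" using w w' by simp
  have perm': "\<forall>t. affine_perm n (L' t)"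
    using labels_consistent_affine_perm[OF n2 w'_lt L'] left perm by metis
  have step: "L (t + 1) = L t \<circ> sw n (w t)" "L' (t + 1) = L' t \<circ> sw n (w' t)" for t
    using L L' by (simp_all add: labels_consistent_def)
  have k3: "k + 3 = k + 2 + 1" "k + 2 = k + 1 + 1" by simp_all
  have cols: "L (k + 1) = f \<circ> sw n i" "L (k + 2) = f \<circ> sw n i \<circ> sw n j"
    "L' (k + 1) = f \<circ> sw n j" "L' (k + 2) = f \<circ> sw n j \<circ> sw n i"
    using step[of k] step[of "k + 1"] left w' by (simp_all add: i_def j_def f_def k3)
  have "L' (k + 3) = f \<circ> sw n j \<circ> sw n i \<circ> sw n j"
    using step(2)[of "k + 2"] cols w' by (simp add: k3 j_def)
  also have "\<dots> = f \<circ> sw n i \<circ> sw n j \<circ> sw n i"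
    using sw_braid[OF n ij adj[folded i_def j_def]] by (simp add: comp_assoc)
  also have "\<dots> = L (k + 3)"
    using step(1)[of "k + 2"] cols w2 by (simp add: k3 i_def)
  finally have "L' (k + 3) = L (k + 3)" .
  moreover have "w' t = w t" if "t < k \<or> k + 3 \<le> t" for t
    using that w' by auto
  ultimately have outside: "L' t = L t" if "t < k \<or> k + 3 \<le> t" for t
    using labels_consistent_agree_outside[OF n2 w L L' _ left _ that] by blast
  have "(a' k, a' (k + 1), a' (k + 2)) = braid_weights (a k, a (k + 1), a (k + 2))"
    using a' by (simp add: braid_weights_def)
  note move = braid_move_weights[OF n bhz nonzero perm[rule_format, of k, folded f_def] ij
      adj[folded i_def j_def], of "a k" "a (k + 1)" "a (k + 2)", OF _ _ _ ne this]
  have "weights_given n \<alpha> \<tau> w' a' L'"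
    unfolding weights_given_iff_cong[OF w'_lt]
  proof (intro allI impI)
    fix t p assume p: "[p = int (w' t)] (mod int n)"
    consider "t = k" | "t = k + 1" | "t = k + 2" | "t < k \<or> k + 3 \<le> t" by linarith
    then show "a' t = crossing_weight_at n \<alpha> \<tau> (L' t) p"
    proof cases
      case 4
      then have "w' t = w t" "a' t = a t" using w' a' by auto
      then show ?thesis using old[where t = t] p outside[OF 4] by simp
    qed (use p move old w' w2 cols left in \<open>auto simp: i_def j_def f_def\<close>)
  qed
  then show ?thesis using w'_lt L' perm' by (simp add: bhz_diagram_def)
qed

lemma commutation_move_preserves_bhz_diagram:
  assumes n: "n \<ge> 3" and D: "bhz_diagram n \<alpha> \<tau> (w, a, L)"
    and L': "labels_consistent n w' L'" and left: "L' k = L k"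
    and comm: "commuting_letters n (w k) (w (k + 1))"
    and w': "w' = w(k := w (k + 1), k + 1 := w k)" and a': "a' = a(k := a (k + 1), k + 1 := a k)"
  shows "bhz_diagram n \<alpha> \<tau> (w', a', L')"
proof -
  have n2: "n \<ge> 2" using n by simp
  have w: "\<forall>t. w t < n" and L: "labels_consistent n w L" and perm: "\<forall>t. affine_perm n (L t)"
    and old: "\<And>t p. [p = int (w t)] (mod int n) \<Longrightarrow> a t = crossing_weight_at n \<alpha> \<tau> (L t) p"
    using D by (auto simp: bhz_diagram_def weights_given_iff_cong)
  define i j f where "i = w k" and "j = w (k + 1)" and "f = L k"
  have ij: "i < n" "j < n" using w by (simp_all add: i_def j_def)
  have comm': "commuting_letters n j i"
    using comm n2 by (auto simp: commuting_letters_iff_cong i_def j_def cong_sym_eq)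
  have w'_lt: "\<forall>t. w' t < n" using w w' by simp
  have perm': "\<forall>t. affine_perm n (L' t)"
    using labels_consistent_affine_perm[OF n2 w'_lt L'] left perm by metis
  have step: "L (t + 1) = L t \<circ> sw n (w t)" "L' (t + 1) = L' t \<circ> sw n (w' t)" for t
    using L L' by (simp_all add: labels_consistent_def)
  have k2: "k + 2 = k + 1 + 1" by simp
  have cols: "L (k + 1) = f \<circ> sw n i" "L' (k + 1) = f \<circ> sw n j"
    using step[of k] left w' by (simp_all add: i_def j_def f_def)
  have "L' (k + 2) = f \<circ> sw n j \<circ> sw n i"
    using step(2)[of "k + 1"] cols w' by (simp add: k2 i_def)
  also have "\<dots> = L (k + 2)"
    using step(1)[of "k + 1"] cols sw_commute[OF ij] comm n2
    by (auto simp: fun_eq_iff k2 j_def i_def commuting_letters_iff_cong)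
  finally have "L' (k + 2) = L (k + 2)" .
  moreover have "w' t = w t" if "t < k \<or> k + 2 \<le> t" for t
    using that w' by auto
  ultimately have outside: "L' t = L t" if "t < k \<or> k + 2 \<le> t" for t
    using labels_consistent_agree_outside[OF n2 w L L' _ left _ that] by blast
  have "weights_given n \<alpha> \<tau> w' a' L'"
    unfolding weights_given_iff_cong[OF w'_lt]
  proof (intro allI impI)
    fix t p assume p: "[p = int (w' t)] (mod int n)"
    consider "t = k" | "t = k + 1" | "t < k \<or> k + 2 \<le> t" by linarith
    then show "a' t = crossing_weight_at n \<alpha> \<tau> (L' t) p"
    proof cases
      case 1
      with p have "[p = int j] (mod int n)" by (simp add: w' j_def)
      with 1 show ?thesis
        using old[where t = "k + 1"] crossing_weight_at_commuting[OF n2 ij(1) comm[folded i_def j_def]]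
        by (simp add: a' left cols j_def f_def)
    next
      case 2
      with p have "[p = int i] (mod int n)" by (simp add: w' i_def)
      with 2 show ?thesis
        using old[where t = k] crossing_weight_at_commuting[OF n2 ij(2) comm']
        by (simp add: a' cols i_def f_def)
    next
      case 3
      then have "w' t = w t" "a' t = a t" using w' a' by auto
      then show ?thesis using old[where t = t] p outside[OF 3] by simp
    qed
  qed
  then show ?thesis using w'_lt L' perm' by (simp add: bhz_diagram_def)
qed

lemma wmove_preserves_bhz_diagram:
  assumes n: "n \<ge> 3" and bhz: "BHZ n \<alpha> \<tau>" and nonzero: "\<forall>s\<in>zvec n. \<tau> s \<noteq> 0"
    and move: "wmove n C C'" and D: "bhz_diagram n \<alpha> \<tau> C"
  shows "bhz_diagram n \<alpha> \<tau> C'"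
  using move D unfolding wmove_def
  by (auto split: prod.splits intro: braid_move_preserves_bhz_diagram[OF n bhz nonzero]
      commutation_move_preserves_bhz_diagram[OF n])

theorem theorem5p5:
  fixes n :: nat and \<alpha> :: "nat \<Rightarrow> real" and \<tau> :: "(nat \<Rightarrow> int) \<Rightarrow> real"
    and w w' :: "int \<Rightarrow> nat" and a a' :: "int \<Rightarrow> real" and L L' :: "int \<Rightarrow> int \<Rightarrow> int"
    and r :: int
  assumes "n \<ge> 3"
    and "biinf_reduced n w"
    and "cylindric_BHZ n \<alpha> \<tau>"
    and "\<forall>s\<in>zvec n. \<tau> s \<noteq> 0"
    and "labels_consistent n w L"
    and "L r = id"
    and "weights_given n \<alpha> \<tau> w a L"
    and "(wmove n)\<^sup>*\<^sup>* (w, a, L) (w', a', L')"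
  shows "weights_given n \<alpha> \<tau> w' a' L'"
proof -
  have letters: "\<forall>t. w t < n" using assms(2) by (simp add: biinf_reduced_def)
  have bhz: "BHZ n \<alpha> \<tau>" using assms(3) by (simp add: cylindric_BHZ_def)
  have "\<forall>t. affine_perm n (L t)"
    using labels_consistent_affine_perm[OF _ letters assms(5), of r] assms(1,6) affine_perm_id by simp
  then have "bhz_diagram n \<alpha> \<tau> (w, a, L)"
    using letters assms(5,7) by (simp add: bhz_diagram_def)
  with assms(8) have "bhz_diagram n \<alpha> \<tau> (w', a', L')"
  proof (induction rule: rtranclp_induct)
    case (step C C')
    then show ?case using wmove_preserves_bhz_diagram[OF assms(1) bhz assms(4)] by blast
  qed
  then show ?thesis by (simp add: bhz_diagram_def)
qed

end
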